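(* Let $q\in(0,1)$, $\alpha\in(-1,1)$, $\beta<1$ real, $n\in\mathbb{N}_0$, and $0<|z|<1$. Then \[ \sum_{k=n}^{\infty}\frac{1-\beta q^k}{1-\alpha q^k}\bigl(\psi_k^+(z)\bigr)^2=\frac{z^2}{z^2-1}\Bigl[(\psi_{n-1}^+)'(z)\,\psi_n^+(z)-\psi_{n-1}^+(z)\,(\psi_n^+)'(z)\Bigr]. \]
   Context: $(a;q)_n:=\prod_{j=0}^{n-1}(1-aq^j)$, $n\in\mathbb{N}_0\cup\{\infty\}$. For $z\ne0$ and integers $n\ge-1$, \[ \psi_n^+(z):=z^n\sum_{k=0}^\infty\frac{(q^{k+1}z^2;q)_\infty}{(q;q)_k}c_k(z)q^{(n+1)k},\qquad c_k(z):=\prod_{j=0}^{k-1}\bigl(\alpha(1+z^2q^{2j})-\beta q^j(1+z^2)\bigr), \] i.e. $\psi_n^+(z)=z^n(qz^2;q)_\infty\,{}_2\phi_1(z\tau,z\tau^{-1};qz^2;q,\alpha q^{n+1})$ with $\alpha(\tau+\tau^{-1})=\beta(z+z^{-1})$. Primes denote derivatives in $z$. *)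

theory Defs
  imports "HOL-Analysis.Analysis"
begin

definition qpoch :: "complex \<Rightarrow> real \<Rightarrow> nat \<Rightarrow> complex" where
  "qpoch a q n = (\<Prod>j<n. 1 - a * of_real q ^ j)"

definition qpoch_inf :: "complex \<Rightarrow> real \<Rightarrow> complex" where
  "qpoch_inf a q = (\<Prod>j. 1 - a * of_real q ^ j)"

definition cc :: "real \<Rightarrow> real \<Rightarrow> real \<Rightarrow> nat \<Rightarrow> complex \<Rightarrow> complex" where
  "cc q \<alpha> \<beta> k z = (\<Prod>j<k. of_real \<alpha> * (1 + z^2 * of_real q ^ (2*j))
                              - of_real \<beta> * of_real q ^ j * (1 + z^2))"

text \<open>psi_n^+(z) for integers n \<ge> -1 (the index is an int; only n \<ge> -1 is used).\<close>
definition psi :: "real \<Rightarrow> real \<Rightarrow> real \<Rightarrow> int \<Rightarrow> complex \<Rightarrow> complex" where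
  "psi q \<alpha> \<beta> n z = z powi n *
     (\<Sum>k. qpoch_inf (of_real q ^ (k+1) * z^2) q / qpoch (of_real q) q k
            * cc q \<alpha> \<beta> k z * of_real q ^ (nat (n+1) * k))"

end

theory Submission
  imports Defs "HOL-Complex_Analysis.Complex_Analysis"
begin

text \<open>
  Write \<open>\<psi>_n(w) = w^n F(q^(n+1), w)\<close> with \<open>F(t, w) = \<Sum>_k T_k(w) t^k\<close>. The ratio
  \<open>T_(k+1) / T_k\<close> turns into a \<open>q\<close>-difference equation for \<open>F\<close> in \<open>t\<close>, which is the
  three-term recurrence \<open>\<psi>_(m+1) = (w + 1/w) \<lambda>_m \<psi>_m - \<psi>_(m-1)\<close>, \<open>\<lambda>_m = (1 - \<beta> q^m) / (1 - \<alpha> q^m)\<close>.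
  Differentiating it, the Wronskians \<open>W_m = \<psi>_(m-1)' \<psi>_m - \<psi>_(m-1) \<psi>_m'\<close> satisfy
  \<open>W_m - W_(m+1) = (1 - 1/z^2) \<lambda>_m \<psi>_m(z)^2\<close>, so the series telescopes to \<open>W_n / (1 - 1/z^2)\<close>
  once \<open>W_m \<rightarrow> 0\<close> is known. For that, the coefficients \<open>T_k\<close> are bounded on the closed unit disc
  by a summable sequence (its ratios tend to \<open>|\<alpha>| < 1\<close>), so \<open>\<psi>_m = O(\<rho>^m)\<close> with \<open>\<rho> < 1\<close> on a
  small disc around \<open>z\<close>, and Cauchy's estimate gives the same bound for \<open>\<psi>_m'\<close>.
\<close>

section \<open>The \<open>q\<close>-Pochhammer symbol\<close>

lemma convergent_prod_qpoch:
  assumes "\<bar>q\<bar> < 1"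
  shows "convergent_prod (\<lambda>j. 1 - a * of_real q ^ j :: complex)"
proof -
  have "summable (\<lambda>j. norm a * \<bar>q\<bar> ^ j)"
    using assms by (intro summable_mult summable_geometric) auto
  then have "summable (\<lambda>j. norm ((1 - a * of_real q ^ j) - 1))"
    by (simp add: norm_mult norm_power)
  then show ?thesis
    by (intro abs_convergent_prod_imp_convergent_prod summable_imp_abs_convergent_prod)
qed

lemma qpoch_LIMSEQ:
  assumes "\<bar>q\<bar> < 1"
  shows "(\<lambda>n. qpoch a q n) \<longlonglongrightarrow> qpoch_inf a q"
proof -
  have "(\<lambda>n. \<Prod>j\<le>n. 1 - a * of_real q ^ j) \<longlonglongrightarrow> qpoch_inf a q"
    unfolding qpoch_inf_def by (rule convergent_prod_LIMSEQ[OF convergent_prod_qpoch[OF assms]])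
  then have "(\<lambda>n. qpoch a q (Suc n)) \<longlonglongrightarrow> qpoch_inf a q"
    by (simp add: qpoch_def lessThan_Suc_atMost)
  then show ?thesis
    by (rule LIMSEQ_imp_Suc)
qed

lemma norm_qpoch_le:
  assumes "\<bar>q\<bar> < 1"
  shows "norm (qpoch a q n) \<le> exp (norm a / (1 - \<bar>q\<bar>))"
proof -
  have geometric: "summable (\<lambda>j. norm a * \<bar>q\<bar> ^ j)"
    using assms by (intro summable_mult summable_geometric) auto
  have "norm (qpoch a q n) \<le> (\<Prod>j<n. 1 + norm a * \<bar>q\<bar> ^ j)"
    unfolding qpoch_def prod_norm[symmetric]
    by (intro prod_mono conjI norm_ge_zero order_trans[OF norm_triangle_ineq4])
       (simp add: norm_mult norm_power)
  also have "\<dots> \<le> exp (\<Sum>j<n. norm a * \<bar>q\<bar> ^ j)"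
    by (rule prod_le_exp_sum) simp
  also have "\<dots> \<le> exp (\<Sum>j. norm a * \<bar>q\<bar> ^ j)"
    using sum_le_suminf[OF geometric] by simp
  also have "(\<Sum>j. norm a * \<bar>q\<bar> ^ j) = norm a / (1 - \<bar>q\<bar>)"
    using assms by (simp add: suminf_mult suminf_geometric)
  finally show ?thesis .
qed

lemma norm_qpoch_inf_le:
  assumes "\<bar>q\<bar> < 1"
  shows "norm (qpoch_inf a q) \<le> exp (norm a / (1 - \<bar>q\<bar>))"
  by (rule LIMSEQ_le_const2[OF tendsto_norm[OF qpoch_LIMSEQ[OF assms]]])
     (use norm_qpoch_le[OF assms] in auto)

lemma qpoch_inf_shift:
  assumes "\<bar>q\<bar> < 1"
  shows "qpoch_inf a q = (1 - a) * qpoch_inf (a * of_real q) q"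
proof -
  have "(\<lambda>j. 1 - a * of_real q ^ j) has_prod
          ((\<Prod>j<1. 1 - a * of_real q ^ j) * (\<Prod>j. 1 - a * of_real q ^ (j + 1)))"
    by (rule has_prod_ignore_initial_segment'[OF convergent_prod_qpoch[OF assms]])
  then have "qpoch_inf a q = (\<Prod>j<1. 1 - a * of_real q ^ j) * (\<Prod>j. 1 - a * of_real q ^ (j + 1))"
    unfolding qpoch_inf_def by (rule has_prod_unique[symmetric])
  then show ?thesis
    by (simp add: qpoch_inf_def mult_ac)
qed

lemma qpoch_inf_holomorphic:
  assumes "\<bar>q\<bar> < 1"
  shows "(\<lambda>a. qpoch_inf a q) holomorphic_on UNIV"
proof (rule holomorphic_uniform_sequence[where f = "\<lambda>n a. qpoch a q n"])
  fix n
  show "(\<lambda>a. qpoch a q n) holomorphic_on UNIV"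
    unfolding qpoch_def by (intro holomorphic_intros)
next
  fix x :: complex
  have "uniformly_convergent_on (cball x 1) (\<lambda>n a. qpoch a q n)"
    unfolding qpoch_def
  proof (rule uniformly_convergent_on_prod')
    show "uniformly_convergent_on (cball x 1) (\<lambda>N a. \<Sum>j<N. norm ((1 - a * of_real q ^ j) - 1))"
    proof (rule Weierstrass_m_test'[where M = "\<lambda>j. (norm x + 1) * \<bar>q\<bar> ^ j"])
      fix j a
      assume "a \<in> cball x 1"
      then have "norm a \<le> norm x + 1"
        using norm_triangle_ineq2[of a x] by (simp add: dist_norm norm_minus_commute)
      then show "norm (norm ((1 - a * of_real q ^ j) - 1)) \<le> (norm x + 1) * \<bar>q\<bar> ^ j"
        by (simp add: norm_mult norm_power mult_right_mono)
    next
      show "summable (\<lambda>j. (norm x + 1) * \<bar>q\<bar> ^ j)"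
        using assms by (intro summable_mult summable_geometric) auto
    qed
  qed (auto intro!: continuous_intros)
  then obtain g where g: "uniform_limit (cball x 1) (\<lambda>n a. qpoch a q n) g sequentially"
    unfolding uniformly_convergent_on_def by blast
  have limit: "g a = qpoch_inf a q" if "a \<in> cball x 1" for a
    using LIMSEQ_unique[OF tendsto_uniform_limitI[OF g that] qpoch_LIMSEQ[OF assms]] .
  have "uniform_limit (cball x 1) (\<lambda>n a. qpoch a q n) (\<lambda>a. qpoch_inf a q) sequentially
      \<longleftrightarrow> uniform_limit (cball x 1) (\<lambda>n a. qpoch a q n) g sequentially"
    by (intro uniform_limit_cong') (simp_all add: limit)
  with g have "uniform_limit (cball x 1) (\<lambda>n a. qpoch a q n) (\<lambda>a. qpoch_inf a q) sequentially"
    by blast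
  then show "\<exists>d>0. cball x d \<subseteq> UNIV \<and>
      uniform_limit (cball x d) (\<lambda>n a. qpoch a q n) (\<lambda>a. qpoch_inf a q) sequentially"
    by (intro exI[of _ 1]) auto
qed simp

section \<open>Wronskians and the Cauchy estimate\<close>

text \<open>The sign convention is that of the theorem, the negative of the usual \<open>f g' - f' g\<close>.\<close>

definition wronskian :: "('a::real_normed_field \<Rightarrow> 'a) \<Rightarrow> ('a \<Rightarrow> 'a) \<Rightarrow> 'a \<Rightarrow> 'a" where
  "wronskian f g z = deriv f z * g z - f z * deriv g z"

lemma wronskian_three_term:
  assumes f: "f field_differentiable at z" and g: "g field_differentiable at z"
    and c: "(c has_field_derivative c') (at z)"
    and h: "eventually (\<lambda>w. h w = c w * g w - f w) (nhds z)"
  shows "wronskian g h z = wronskian f g z - c' * g z ^ 2"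
proof -
  have "deriv h z = deriv (\<lambda>w. c w * g w - f w) z"
    by (rule deriv_cong_ev[OF h refl])
  also have "\<dots> = c' * g z + c z * deriv g z - deriv f z"
    using f g c unfolding DERIV_deriv_iff_field_differentiable[symmetric]
    by (auto intro!: DERIV_imp_deriv derivative_eq_intros)
  finally have dh: "deriv h z = c' * g z + c z * deriv g z - deriv f z" .
  have hz: "h z = c z * g z - f z"
    using h by (rule eventually_nhds_x_imp_x)
  show ?thesis
    unfolding wronskian_def dh hz by (simp add: algebra_simps power2_eq_square)
qed

lemma norm_deriv_le_of_cball:
  assumes holo: "f holomorphic_on cball z r" and "0 < r"
    and bound: "\<And>w. w \<in> cball z r \<Longrightarrow> norm (f w) \<le> M"
  shows "norm (deriv f z) \<le> M / r"
proof -
  have "norm ((deriv ^^ 1) f z) \<le> fact 1 * M / r ^ 1"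
  proof (rule Cauchy_inequality)
    show "f holomorphic_on ball z r"
      using holo by (rule holomorphic_on_subset) auto
    show "continuous_on (cball z r) f"
      using holo by (rule holomorphic_on_imp_continuous_on)
  qed (use \<open>0 < r\<close> bound in \<open>auto simp: dist_norm\<close>)
  then show ?thesis
    by simp
qed

section \<open>The series defining \<open>\<psi>\<close>\<close>

lemma summable_prod_of_ratio_limit:
  fixes r :: "nat \<Rightarrow> real"
  assumes nonneg: "\<And>j. 0 \<le> r j" and lim: "r \<longlonglongrightarrow> L" and "L < 1"
  shows "summable (\<lambda>k. \<Prod>j<k. r j)"
proof -
  have "eventually (\<lambda>j. r j < (1 + L) / 2) sequentially"
    using order_tendstoD(2)[OF lim, of "(1 + L) / 2"] \<open>L < 1\<close> by simp
  then obtain N where N: "\<And>j. j \<ge> N \<Longrightarrow> r j < (1 + L) / 2"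
    by (auto simp: eventually_sequentially)
  have norm_prod: "norm (\<Prod>j<k. r j) = (\<Prod>j<k. r j)" for k
    using nonneg by (simp add: prod_nonneg)
  show ?thesis
  proof (rule summable_ratio_test[of "(1 + L) / 2" N])
    show "(1 + L) / 2 < 1"
      using \<open>L < 1\<close> by simp
  next
    fix n
    assume "N \<le> n"
    then have "r n * (\<Prod>j<n. r j) \<le> (1 + L) / 2 * (\<Prod>j<n. r j)"
      using N nonneg by (intro mult_right_mono prod_nonneg) (auto simp: less_imp_le)
    then show "norm (\<Prod>j<Suc n. r j) \<le> (1 + L) / 2 * norm (\<Prod>j<n. r j)"
      unfolding norm_prod by (simp add: mult.commute)
  qed
qed

definition psi_coeff :: "real \<Rightarrow> real \<Rightarrow> real \<Rightarrow> nat \<Rightarrow> complex \<Rightarrow> complex" where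
  "psi_coeff q \<alpha> \<beta> k w =
     qpoch_inf (of_real q ^ (k+1) * w^2) q / qpoch (of_real q) q k * cc q \<alpha> \<beta> k w"

definition psi_series :: "real \<Rightarrow> real \<Rightarrow> real \<Rightarrow> complex \<Rightarrow> complex \<Rightarrow> complex" where
  "psi_series q \<alpha> \<beta> t w = (\<Sum>k. psi_coeff q \<alpha> \<beta> k w * t ^ k)"

definition psi_majorant :: "real \<Rightarrow> real \<Rightarrow> real \<Rightarrow> nat \<Rightarrow> real" where
  "psi_majorant q \<alpha> \<beta> k =
     exp (1 / (1 - q)) * (\<Prod>j<k. (\<bar>\<alpha>\<bar> + (\<bar>\<alpha>\<bar> + 2 * \<bar>\<beta>\<bar>) * q ^ j) / (1 - q ^ Suc j))"

lemma psi_eq_psi_series: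
  "psi q \<alpha> \<beta> n w = w powi n * psi_series q \<alpha> \<beta> (of_real q ^ nat (n+1)) w"
  unfolding psi_def psi_series_def psi_coeff_def by (simp add: power_mult)

lemma psi_neighbours_eq_psi_series:
  fixes q :: real
  assumes "w \<noteq> 0"
  defines "Q \<equiv> (of_real q :: complex)"
  shows "psi q \<alpha> \<beta> (int m - 1) w = w ^ m / w * psi_series q \<alpha> \<beta> (Q ^ m) w"
    and "psi q \<alpha> \<beta> (int m) w = w ^ m * psi_series q \<alpha> \<beta> (Q * Q ^ m) w"
    and "psi q \<alpha> \<beta> (int m + 1) w = w * w ^ m * psi_series q \<alpha> \<beta> (Q^2 * Q ^ m) w"
proof -
  show "psi q \<alpha> \<beta> (int m - 1) w = w ^ m / w * psi_series q \<alpha> \<beta> (Q ^ m) w"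
    unfolding psi_eq_psi_series Q_def using power_int_diff[of w "int m" 1] assms by simp
  have "nat (int m + 1) = Suc m"
    by simp
  then show "psi q \<alpha> \<beta> (int m) w = w ^ m * psi_series q \<alpha> \<beta> (Q * Q ^ m) w"
    unfolding psi_eq_psi_series Q_def power_int_of_nat by simp
  have "int m + 1 = int (m + 1)" "nat (int (m + 1) + 1) = m + 2" "Q ^ (m + 2) = Q^2 * Q ^ m"
    by (simp_all add: power_add power2_eq_square mult.commute)
  then show "psi q \<alpha> \<beta> (int m + 1) w = w * w ^ m * psi_series q \<alpha> \<beta> (Q^2 * Q ^ m) w"
    unfolding Q_def by (simp only: psi_eq_psi_series power_int_of_nat) (simp add: mult_ac)
qed

context
  fixes q \<alpha> \<beta> :: real
  assumes q_pos: "0 < q" and q_less_one: "q < 1"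
begin

lemma prod_one_minus_power_pos: "0 < (\<Prod>j<k. 1 - q ^ Suc j)"
  using power_Suc_less_one[OF q_pos q_less_one] by (simp add: prod_pos)

lemma qpoch_self_eq: "qpoch (of_real q) q k = of_real (\<Prod>j<k. 1 - q ^ Suc j)"
  by (simp add: qpoch_def)

lemma qpoch_self_nonzero: "qpoch (of_real q) q k \<noteq> 0"
  using prod_one_minus_power_pos[of k] by (simp only: qpoch_self_eq of_real_eq_0_iff)

lemma norm_cc_le:
  assumes w: "norm w \<le> 1"
  shows "norm (cc q \<alpha> \<beta> k w) \<le> (\<Prod>j<k. \<bar>\<alpha>\<bar> + (\<bar>\<alpha>\<bar> + 2 * \<bar>\<beta>\<bar>) * q ^ j)"
  unfolding cc_def prod_norm[symmetric]
proof (intro prod_mono conjI norm_ge_zero)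
  fix j
  have qj: "0 \<le> q ^ j" "q ^ (2*j) \<le> q ^ j"
    using q_pos q_less_one by (auto intro: power_decreasing)
  have w2: "norm (w^2) \<le> 1"
    using w by (simp add: norm_power power_le_one)
  have "norm (1 + w^2 * of_real q ^ (2*j)) \<le> 1 + q ^ j"
    using norm_triangle_ineq[of 1 "w^2 * of_real q ^ (2*j)"] mult_mono[OF w2 qj(2)] qj q_pos
    by (simp add: norm_mult norm_power)
  then have A: "norm (of_real \<alpha> * (1 + w^2 * of_real q ^ (2*j))) \<le> \<bar>\<alpha>\<bar> * (1 + q ^ j)"
    by (simp add: norm_mult mult_left_mono)
  have "norm (1 + w^2) \<le> 2"
    using norm_triangle_ineq[of 1 "w^2"] w2 by simp
  then have B: "norm (of_real \<beta> * of_real q ^ j * (1 + w^2)) \<le> \<bar>\<beta>\<bar> * q ^ j * 2"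
    using q_pos by (simp add: norm_mult norm_power mult_left_mono)
  show "norm (of_real \<alpha> * (1 + w^2 * of_real q ^ (2*j)) - of_real \<beta> * of_real q ^ j * (1 + w^2))
        \<le> \<bar>\<alpha>\<bar> + (\<bar>\<alpha>\<bar> + 2 * \<bar>\<beta>\<bar>) * q ^ j"
    using norm_triangle_ineq4[of "of_real \<alpha> * (1 + w^2 * of_real q ^ (2*j))"
        "of_real \<beta> * of_real q ^ j * (1 + w^2)"] A B
    by (simp add: algebra_simps)
qed

lemma psi_majorant_nonneg: "0 \<le> psi_majorant q \<alpha> \<beta> k"
proof -
  have "q ^ Suc j < 1" for j
    using q_pos q_less_one by (rule power_Suc_less_one)
  then show ?thesis
    unfolding psi_majorant_def using q_pos
    by (intro mult_nonneg_nonneg prod_nonneg divide_nonneg_nonneg) (auto simp: less_imp_le)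
qed

lemma norm_psi_coeff_le:
  assumes w: "norm w \<le> 1"
  shows "norm (psi_coeff q \<alpha> \<beta> k w) \<le> psi_majorant q \<alpha> \<beta> k"
proof -
  define P where "P = (\<Prod>j<k. 1 - q ^ Suc j)"
  have P: "0 < P"
    unfolding P_def by (rule prod_one_minus_power_pos)
  have "norm (of_real q ^ (k+1) * w^2) \<le> 1"
    using w q_pos q_less_one by (simp add: norm_mult norm_power mult_le_one power_le_one)
  then have "exp (norm (of_real q ^ (k+1) * w^2) / (1 - \<bar>q\<bar>)) \<le> exp (1 / (1 - q))"
    using q_pos q_less_one by (simp add: divide_right_mono)
  moreover have "norm (qpoch_inf (of_real q ^ (k+1) * w^2) q)
      \<le> exp (norm (of_real q ^ (k+1) * w^2) / (1 - \<bar>q\<bar>))"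
    using q_pos q_less_one by (intro norm_qpoch_inf_le) simp
  ultimately have Q: "norm (qpoch_inf (of_real q ^ (k+1) * w^2) q) \<le> exp (1 / (1 - q))"
    by linarith
  have "norm (psi_coeff q \<alpha> \<beta> k w)
        = norm (qpoch_inf (of_real q ^ (k+1) * w^2) q) * norm (cc q \<alpha> \<beta> k w) / P"
    unfolding psi_coeff_def qpoch_self_eq P_def[symmetric] using P
    by (simp only: norm_mult norm_divide norm_of_real abs_of_pos) simp
  also have "\<dots> \<le> exp (1 / (1 - q)) * (\<Prod>j<k. \<bar>\<alpha>\<bar> + (\<bar>\<alpha>\<bar> + 2 * \<bar>\<beta>\<bar>) * q ^ j) / P"
    using P Q norm_cc_le[OF w, of k] by (intro divide_right_mono mult_mono) auto
  also have "\<dots> = psi_majorant q \<alpha> \<beta> k"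
    unfolding psi_majorant_def P_def by (simp add: prod_dividef)
  finally show ?thesis .
qed

lemma norm_psi_term_le:
  assumes "norm w \<le> 1" "norm t \<le> 1"
  shows "norm (psi_coeff q \<alpha> \<beta> k w * t ^ k) \<le> psi_majorant q \<alpha> \<beta> k"
proof -
  have "norm (psi_coeff q \<alpha> \<beta> k w * t ^ k) \<le> psi_majorant q \<alpha> \<beta> k * 1"
    unfolding norm_mult norm_power
    by (intro mult_mono norm_psi_coeff_le power_le_one psi_majorant_nonneg assms) auto
  then show ?thesis
    by simp
qed

lemma psi_coeff_Suc:
  "(1 - of_real q ^ Suc k) * (1 - of_real q ^ Suc k * w^2) * psi_coeff q \<alpha> \<beta> (Suc k) w
   = (of_real \<alpha> * (1 + w^2 * of_real q ^ (2*k)) - of_real \<beta> * of_real q ^ k * (1 + w^2))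
     * psi_coeff q \<alpha> \<beta> k w"
proof -
  define Q where "Q = (of_real q :: complex)"
  define x where "x = Q ^ (k+1) * w^2"
  define f where "f = of_real \<alpha> * (1 + w^2 * Q ^ (2*k)) - of_real \<beta> * Q ^ k * (1 + w^2)"
  have "qpoch_inf x q = (1 - x) * qpoch_inf (x * Q) q"
    unfolding Q_def using q_pos q_less_one by (intro qpoch_inf_shift) simp
  also have "x * Q = Q ^ (Suc k + 1) * w^2"
    by (simp add: x_def mult_ac)
  finally have shift: "qpoch_inf x q = (1 - x) * qpoch_inf (Q ^ (Suc k + 1) * w^2) q" .
  have qpoch_Suc: "qpoch Q q (Suc k) = qpoch Q q k * (1 - Q ^ (k+1))"
    by (simp add: qpoch_def Q_def)
  have cc_Suc: "cc q \<alpha> \<beta> (Suc k) w = cc q \<alpha> \<beta> k w * f"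
    by (simp add: cc_def f_def Q_def)
  have "Q ^ (k+1) \<noteq> 1"
    using power_Suc_less_one[OF q_pos q_less_one, of k] unfolding Q_def
    by (metis Suc_eq_plus1 less_irrefl of_real_eq_1_iff of_real_power)
  moreover have "qpoch Q q k \<noteq> 0"
    unfolding Q_def by (rule qpoch_self_nonzero)
  ultimately have "(1 - Q ^ (k+1)) * (1 - x) * psi_coeff q \<alpha> \<beta> (Suc k) w = f * psi_coeff q \<alpha> \<beta> k w"
    unfolding psi_coeff_def Q_def[symmetric] x_def[symmetric] shift qpoch_Suc cc_Suc
    by (simp add: field_simps)
  then show ?thesis
    by (simp add: Q_def x_def f_def)
qed

lemma psi_coeff_Suc_mult_power:
  fixes t w :: complex
  defines "Q \<equiv> (of_real q :: complex)" and "T \<equiv> \<lambda>k. psi_coeff q \<alpha> \<beta> k w"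
  shows "(1 - Q ^ Suc k) * (1 - Q ^ Suc k * w^2) * T (Suc k) * t ^ Suc k
         = t * (of_real \<alpha> * (T k * t ^ k) + of_real \<alpha> * w^2 * (T k * (Q^2 * t) ^ k)
                - of_real \<beta> * (1 + w^2) * (T k * (Q * t) ^ k))"
proof -
  have powers: "(Q * t) ^ k = Q ^ k * t ^ k" "(Q^2 * t) ^ k = Q ^ k * Q ^ k * t ^ k"
    "Q ^ (2*k) = Q ^ k * Q ^ k"
    by (simp_all add: power_mult_distrib power_mult power2_eq_square)
  have "(1 - Q ^ Suc k) * (1 - Q ^ Suc k * w^2) * T (Suc k)
      = (of_real \<alpha> * (1 + w^2 * Q ^ (2*k)) - of_real \<beta> * Q ^ k * (1 + w^2)) * T k"
    unfolding T_def Q_def by (rule psi_coeff_Suc)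
  then have "(1 - Q ^ Suc k) * (1 - Q ^ Suc k * w^2) * T (Suc k) * t ^ Suc k
      = (of_real \<alpha> * (1 + w^2 * Q ^ (2*k)) - of_real \<beta> * Q ^ k * (1 + w^2)) * T k * t ^ Suc k"
    by (simp only:)
  also have "\<dots> = t * (of_real \<alpha> * (T k * t ^ k) + of_real \<alpha> * w^2 * (T k * (Q^2 * t) ^ k)
                - of_real \<beta> * (1 + w^2) * (T k * (Q * t) ^ k))"
    unfolding powers by (simp add: algebra_simps)
  finally show ?thesis .
qed

lemma psi_coeff_holomorphic: "psi_coeff q \<alpha> \<beta> k holomorphic_on UNIV"
proof -
  have "((\<lambda>a. qpoch_inf a q) \<circ> (\<lambda>w. of_real q ^ (k+1) * w^2)) holomorphic_on UNIV"
    using q_pos q_less_one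
    by (intro holomorphic_on_compose holomorphic_on_subset[OF qpoch_inf_holomorphic])
       (auto intro!: holomorphic_intros)
  then show ?thesis
    unfolding psi_coeff_def cc_def using qpoch_self_nonzero
    by (intro holomorphic_intros) (simp_all add: o_def)
qed

context
  assumes alpha_abs_less_one: "\<bar>\<alpha>\<bar> < 1"
begin

lemma summable_psi_majorant: "summable (psi_majorant q \<alpha> \<beta>)"
proof -
  define r where "r j = (\<bar>\<alpha>\<bar> + (\<bar>\<alpha>\<bar> + 2 * \<bar>\<beta>\<bar>) * q ^ j) / (1 - q ^ Suc j)" for j
  have "q ^ Suc j < 1" for j
    using q_pos q_less_one by (rule power_Suc_less_one)
  then have r_nonneg: "0 \<le> r j" for j
    unfolding r_def using q_pos by (intro divide_nonneg_nonneg) (auto simp: less_imp_le)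
  have "r \<longlonglongrightarrow> (\<bar>\<alpha>\<bar> + (\<bar>\<alpha>\<bar> + 2 * \<bar>\<beta>\<bar>) * 0) / (1 - q * 0)"
    unfolding r_def power_Suc using q_pos q_less_one by (intro tendsto_intros) auto
  then have "summable (\<lambda>k. \<Prod>j<k. r j)"
    using r_nonneg alpha_abs_less_one by (intro summable_prod_of_ratio_limit[of r "\<bar>\<alpha>\<bar>"]) auto
  then show ?thesis
    unfolding psi_majorant_def r_def by (rule summable_mult)
qed

lemma psi_series_sums:
  assumes "norm w \<le> 1" "norm t \<le> 1"
  shows "(\<lambda>k. psi_coeff q \<alpha> \<beta> k w * t ^ k) sums psi_series q \<alpha> \<beta> t w"
  unfolding psi_series_def
  by (rule summable_sums, rule summable_comparison_test'[OF summable_psi_majorant])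
     (rule norm_psi_term_le[OF assms])

lemma norm_psi_series_le:
  assumes "norm w \<le> 1" "norm t \<le> 1"
  shows "norm (psi_series q \<alpha> \<beta> t w) \<le> suminf (psi_majorant q \<alpha> \<beta>)"
  unfolding psi_series_def
  by (rule norm_suminf_le[OF norm_psi_term_le[OF assms] summable_psi_majorant])

lemma psi_series_holomorphic:
  assumes t: "norm t \<le> 1"
  shows "psi_series q \<alpha> \<beta> t holomorphic_on ball 0 1"
proof -
  have "uniform_limit (cball 0 1) (\<lambda>n w. \<Sum>k<n. psi_coeff q \<alpha> \<beta> k w * t ^ k)
          (psi_series q \<alpha> \<beta> t) sequentially"
    unfolding psi_series_def
    by (rule Weierstrass_m_test[OF _ summable_psi_majorant]) (use norm_psi_term_le t in auto)
  moreover have "(\<lambda>w. \<Sum>k<n. psi_coeff q \<alpha> \<beta> k w * t ^ k) holomorphic_on S" for n S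
    by (intro holomorphic_intros holomorphic_on_subset[OF psi_coeff_holomorphic]) auto
  ultimately show ?thesis
    by (elim holomorphic_uniform_limit[rotated])
       (auto intro!: always_eventually holomorphic_on_imp_continuous_on
             elim: holomorphic_on_subset)
qed

lemma psi_series_q_difference:
  assumes w: "norm w \<le> 1" and t: "norm t \<le> 1"
  defines "Q \<equiv> (of_real q :: complex)" and "F \<equiv> \<lambda>s. psi_series q \<alpha> \<beta> s w"
  shows "F t - (1 + w^2) * F (Q * t) + w^2 * F (Q^2 * t)
       = t * (of_real \<alpha> * F t + of_real \<alpha> * w^2 * F (Q^2 * t) - of_real \<beta> * (1 + w^2) * F (Q * t))"
proof -
  define T where "T k = psi_coeff q \<alpha> \<beta> k w" for k
  have "norm Q \<le> 1"
    using q_pos q_less_one by (simp add: Q_def)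
  then have "norm (Q * t) \<le> 1" "norm (Q^2 * t) \<le> 1"
    using t by (simp_all add: norm_mult norm_power mult_le_one power_le_one)
  then have sums: "(\<lambda>k. T k * s ^ k) sums F s" if "s \<in> {t, Q * t, Q^2 * t}" for s
    using that psi_series_sums[OF w] t unfolding T_def F_def by auto
  have powers: "(Q * t) ^ k = Q ^ k * t ^ k" "(Q^2 * t) ^ k = Q ^ k * Q ^ k * t ^ k" for k
    by (simp_all add: power_mult_distrib power2_eq_square)
  define g where "g k = (1 - Q^k) * (1 - Q^k * w^2) * T k * t ^ k" for k
  have "g = (\<lambda>k. T k * t ^ k - (1 + w^2) * (T k * (Q * t) ^ k) + w^2 * (T k * (Q^2 * t) ^ k))"
    unfolding g_def[abs_def] powers by (simp add: algebra_simps)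
  then have lhs: "g sums (F t - (1 + w^2) * F (Q * t) + w^2 * F (Q^2 * t))"
    by (simp only:) (intro sums_add sums_diff sums_mult sums, auto)
  have "g (Suc k) = t * (of_real \<alpha> * (T k * t ^ k) + of_real \<alpha> * w^2 * (T k * (Q^2 * t) ^ k)
      - of_real \<beta> * (1 + w^2) * (T k * (Q * t) ^ k))" for k
    unfolding g_def T_def Q_def by (rule psi_coeff_Suc_mult_power)
  then have "(\<lambda>k. g (Suc k))
      sums (t * (of_real \<alpha> * F t + of_real \<alpha> * w^2 * F (Q^2 * t) - of_real \<beta> * (1 + w^2) * F (Q * t)))"
    by (simp only:) (intro sums_add sums_diff sums_mult sums, auto)
  moreover have "g 0 = 0"
    by (simp add: g_def)
  ultimately have "g sums (t * (of_real \<alpha> * F t + of_real \<alpha> * w^2 * F (Q^2 * t)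
      - of_real \<beta> * (1 + w^2) * F (Q * t)))"
    by (simp add: sums_Suc_iff)
  with lhs show ?thesis
    by (rule sums_unique2)
qed

lemma psi_recurrence:
  assumes w: "norm w \<le> 1" "w \<noteq> 0"
  shows "psi q \<alpha> \<beta> (int m + 1) w
         = (w + 1/w) * of_real ((1 - \<beta> * q^m) / (1 - \<alpha> * q^m)) * psi q \<alpha> \<beta> (int m) w
           - psi q \<alpha> \<beta> (int m - 1) w"
proof -
  define Q where "Q = (of_real q :: complex)"
  define \<tau> where "\<tau> = Q ^ m"
  define W where "W = w ^ m"
  define A B C where "A = psi_series q \<alpha> \<beta> \<tau> w" and "B = psi_series q \<alpha> \<beta> (Q * \<tau>) w"
    and "C = psi_series q \<alpha> \<beta> (Q^2 * \<tau>) w"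
  have "norm \<tau> \<le> 1"
    using q_pos q_less_one by (simp add: \<tau>_def Q_def norm_power power_le_one)
  then have q_difference: "A - (1 + w^2) * B + w^2 * C
      = \<tau> * (of_real \<alpha> * A + of_real \<alpha> * w^2 * C - of_real \<beta> * (1 + w^2) * B)"
    unfolding A_def B_def C_def Q_def by (rule psi_series_q_difference[OF w(1)])
  have "\<bar>\<alpha> * q^m\<bar> \<le> \<bar>\<alpha>\<bar>"
    using q_pos q_less_one by (simp add: abs_mult mult_left_le power_le_one)
  then have "\<alpha> * q^m \<noteq> 1"
    using alpha_abs_less_one by auto
  then have nonzero: "1 - of_real \<alpha> * \<tau> \<noteq> 0"
    unfolding \<tau>_def Q_def by (metis of_real_1 of_real_eq_iff of_real_mult of_real_power right_minus_eq)
  have ratio: "of_real ((1 - \<beta> * q^m) / (1 - \<alpha> * q^m)) = (1 - of_real \<beta> * \<tau>) / (1 - of_real \<alpha> * \<tau>)"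
    by (simp add: \<tau>_def Q_def)
  show ?thesis
    unfolding psi_neighbours_eq_psi_series[OF w(2)] Q_def[symmetric] \<tau>_def[symmetric]
      A_def[symmetric] B_def[symmetric] C_def[symmetric] W_def[symmetric] ratio
    using q_difference nonzero w(2) by (simp add: field_simps) algebra
qed

lemma psi_holomorphic: "psi q \<alpha> \<beta> n holomorphic_on ball 0 1 - {0}"
proof -
  have "norm ((of_real q :: complex) ^ nat (n+1)) \<le> 1"
    using q_pos q_less_one by (simp add: norm_power power_le_one)
  then show ?thesis
    unfolding psi_eq_psi_series[abs_def]
    by (intro holomorphic_intros holomorphic_on_subset[OF psi_series_holomorphic]) auto
qed

lemma wronskian_psi_Suc:
  assumes "0 < norm z" "norm z < 1"
  shows "wronskian (psi q \<alpha> \<beta> (int m)) (psi q \<alpha> \<beta> (int m + 1)) z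
       = wronskian (psi q \<alpha> \<beta> (int m - 1)) (psi q \<alpha> \<beta> (int m)) z
         - (1 - 1/z^2) * of_real ((1 - \<beta> * q^m) / (1 - \<alpha> * q^m)) * psi q \<alpha> \<beta> (int m) z ^ 2"
proof (rule wronskian_three_term[where c = "\<lambda>w. (w + 1/w) * of_real ((1 - \<beta> * q^m) / (1 - \<alpha> * q^m))"])
  let ?S = "ball 0 1 - {0} :: complex set"
  have S: "open ?S" "z \<in> ?S"
    using assms by auto
  show "psi q \<alpha> \<beta> (int m - 1) field_differentiable at z" "psi q \<alpha> \<beta> (int m) field_differentiable at z"
    by (rule holomorphic_on_imp_differentiable_at[OF psi_holomorphic S])+
  have "((\<lambda>w. (w + 1/w) * c) has_field_derivative (1 - 1/z^2) * c) (at z)" for c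
    using assms by (auto intro!: derivative_eq_intros simp: field_simps power2_eq_square)
  then show "((\<lambda>w. (w + 1/w) * of_real ((1 - \<beta> * q^m) / (1 - \<alpha> * q^m))) has_field_derivative
      (1 - 1/z^2) * of_real ((1 - \<beta> * q^m) / (1 - \<alpha> * q^m))) (at z)" .
  show "\<forall>\<^sub>F w in nhds z. psi q \<alpha> \<beta> (int m + 1) w
      = (w + 1/w) * of_real ((1 - \<beta> * q^m) / (1 - \<alpha> * q^m)) * psi q \<alpha> \<beta> (int m) w
        - psi q \<alpha> \<beta> (int m - 1) w"
    using eventually_nhds_in_open[OF S] by eventually_elim (rule psi_recurrence; simp)
qed

section \<open>Decay of the Wronskians\<close>

lemma norm_psi_le:
  assumes "norm w \<le> \<rho>" "\<rho> \<le> 1"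
  shows "norm (psi q \<alpha> \<beta> (int j) w) \<le> \<rho> ^ j * suminf (psi_majorant q \<alpha> \<beta>)"
proof -
  have "norm ((of_real q :: complex) ^ nat (int j + 1)) \<le> 1"
    using q_pos q_less_one by (simp add: norm_power power_le_one)
  then have "norm (psi_series q \<alpha> \<beta> (of_real q ^ nat (int j + 1)) w) \<le> suminf (psi_majorant q \<alpha> \<beta>)"
    using assms by (intro norm_psi_series_le) auto
  moreover have "0 \<le> \<rho>"
    using assms(1) norm_ge_zero[of w] by linarith
  moreover have "norm w ^ j \<le> \<rho> ^ j"
    using assms(1) by (intro power_mono) auto
  ultimately show ?thesis
    unfolding psi_eq_psi_series norm_mult power_int_of_nat norm_power
    by (intro mult_mono) auto
qed

lemma psi_geometric_bound:
  assumes "0 < norm z" "norm z < 1"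
  obtains \<rho> C where "0 \<le> \<rho>" "\<rho> < 1"
    "\<And>j. norm (psi q \<alpha> \<beta> (int j) z) \<le> C * \<rho> ^ j"
    "\<And>j. norm (deriv (psi q \<alpha> \<beta> (int j)) z) \<le> C * \<rho> ^ j"
proof -
  define r where "r = min (norm z) (1 - norm z) / 2"
  define \<rho> where "\<rho> = norm z + r"
  define M where "M = suminf (psi_majorant q \<alpha> \<beta>)"
  have r: "0 < r" "r < norm z" "\<rho> < 1" "0 \<le> \<rho>"
    using assms unfolding r_def \<rho>_def min_def by (auto simp: field_simps)
  have "M \<ge> 0"
    unfolding M_def by (intro suminf_nonneg summable_psi_majorant psi_majorant_nonneg)
  have disc: "norm w \<le> \<rho>" "w \<in> ball 0 1 - {0}" if "w \<in> cball z r" for w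
    using that norm_triangle_ineq2[of w z] norm_triangle_ineq2[of z w] r
    by (auto simp: \<rho>_def dist_norm norm_minus_commute)
  have psi_le: "norm (psi q \<alpha> \<beta> (int j) w) \<le> \<rho> ^ j * M" if "w \<in> cball z r" for j w
    unfolding M_def using disc[OF that] r by (intro norm_psi_le) auto
  have "cball z r \<subseteq> ball 0 1 - {0}"
    using disc(2) by blast
  then have deriv_le: "norm (deriv (psi q \<alpha> \<beta> (int j)) z) \<le> \<rho> ^ j * M / r" for j
    using r psi_le by (intro norm_deriv_le_of_cball holomorphic_on_subset[OF psi_holomorphic])
  show ?thesis
  proof (rule that[of \<rho> "M + M / r"])
    fix j
    have "(M + M / r) * \<rho> ^ j = \<rho> ^ j * M + \<rho> ^ j * M / r" "0 \<le> \<rho> ^ j * M / r" "0 \<le> \<rho> ^ j * M"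
      using r \<open>M \<ge> 0\<close> by (simp_all add: algebra_simps)
    moreover have "norm (psi q \<alpha> \<beta> (int j) z) \<le> \<rho> ^ j * M"
      using r by (intro psi_le) simp
    ultimately show "norm (psi q \<alpha> \<beta> (int j) z) \<le> (M + M / r) * \<rho> ^ j"
      "norm (deriv (psi q \<alpha> \<beta> (int j)) z) \<le> (M + M / r) * \<rho> ^ j"
      using deriv_le[of j] by linarith+
  qed (use r in simp_all)
qed

lemma wronskian_psi_LIMSEQ:
  assumes "0 < norm z" "norm z < 1"
  shows "(\<lambda>m. wronskian (psi q \<alpha> \<beta> (int m - 1)) (psi q \<alpha> \<beta> (int m)) z) \<longlonglongrightarrow> 0"
proof -
  obtain \<rho> C where "0 \<le> \<rho>" "\<rho> < 1"
    and psi_le: "\<And>j. norm (psi q \<alpha> \<beta> (int j) z) \<le> C * \<rho> ^ j"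
    and deriv_le: "\<And>j. norm (deriv (psi q \<alpha> \<beta> (int j)) z) \<le> C * \<rho> ^ j"
    using psi_geometric_bound[OF assms] by blast
  have bound: "norm (wronskian (psi q \<alpha> \<beta> (int (Suc j) - 1)) (psi q \<alpha> \<beta> (int (Suc j))) z)
      \<le> 2 * C^2 * \<rho> * (\<rho>^2) ^ j" for j
  proof -
    have "norm (wronskian (psi q \<alpha> \<beta> (int (Suc j) - 1)) (psi q \<alpha> \<beta> (int (Suc j))) z)
        \<le> norm (deriv (psi q \<alpha> \<beta> (int j)) z) * norm (psi q \<alpha> \<beta> (int (Suc j)) z)
          + norm (psi q \<alpha> \<beta> (int j) z) * norm (deriv (psi q \<alpha> \<beta> (int (Suc j))) z)"
      unfolding wronskian_def by (simp add: norm_mult[symmetric] norm_triangle_ineq4)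
    also have "\<dots> \<le> (C * \<rho> ^ j) * (C * \<rho> ^ Suc j) + (C * \<rho> ^ j) * (C * \<rho> ^ Suc j)"
      by (intro add_mono mult_mono psi_le deriv_le order_trans[OF norm_ge_zero psi_le]
            order_trans[OF norm_ge_zero deriv_le] norm_ge_zero)
    also have "\<dots> = 2 * C^2 * \<rho> * (\<rho>^2) ^ j"
      by (simp add: power_mult_distrib power2_eq_square algebra_simps)
    finally show ?thesis .
  qed
  have "(\<lambda>j. 2 * C^2 * \<rho> * (\<rho>^2) ^ j) \<longlonglongrightarrow> 0"
    using \<open>0 \<le> \<rho>\<close> \<open>\<rho> < 1\<close> by (intro tendsto_mult_right_zero LIMSEQ_realpow_zero) (auto simp: power_less_one_iff)
  then have "(\<lambda>j. wronskian (psi q \<alpha> \<beta> (int (Suc j) - 1)) (psi q \<alpha> \<beta> (int (Suc j))) z) \<longlonglongrightarrow> 0"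
    by (rule Lim_null_comparison[rotated]) (use bound in auto)
  then show ?thesis
    by (rule LIMSEQ_imp_Suc)
qed

lemma psi_squares_sums_wronskian:
  assumes "0 < norm z" "norm z < 1"
  shows "(\<lambda>k. of_real ((1 - \<beta> * q ^ (k+n)) / (1 - \<alpha> * q ^ (k+n))) * psi q \<alpha> \<beta> (int (k+n)) z ^ 2)
           sums (z^2 / (z^2 - 1) * wronskian (psi q \<alpha> \<beta> (int n - 1)) (psi q \<alpha> \<beta> (int n)) z)"
proof -
  define L where "L = 1 - 1/z^2"
  define X where "X m = of_real ((1 - \<beta> * q ^ m) / (1 - \<alpha> * q ^ m)) * psi q \<alpha> \<beta> (int m) z ^ 2" for m
  define W where "W m = wronskian (psi q \<alpha> \<beta> (int m - 1)) (psi q \<alpha> \<beta> (int m)) z / L" for m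
  have "z \<noteq> 0"
    using assms(1) by auto
  have "norm (z^2) < 1"
    using assms by (simp add: norm_power power_less_one_iff)
  then have "z^2 - 1 \<noteq> 0"
    by auto
  have L_eq: "L = (z^2 - 1) / z^2"
    using \<open>z \<noteq> 0\<close> by (simp add: L_def diff_divide_distrib)
  then have "L \<noteq> 0"
    using \<open>z \<noteq> 0\<close> \<open>z^2 - 1 \<noteq> 0\<close> by simp
  have step: "W m - W (Suc m) = X m" for m
  proof -
    have "wronskian (psi q \<alpha> \<beta> (int (Suc m) - 1)) (psi q \<alpha> \<beta> (int (Suc m))) z
        = wronskian (psi q \<alpha> \<beta> (int m)) (psi q \<alpha> \<beta> (int m + 1)) z"
      by (simp add: add.commute)
    also have "\<dots> = wronskian (psi q \<alpha> \<beta> (int m - 1)) (psi q \<alpha> \<beta> (int m)) z - L * X m"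
      unfolding L_def X_def by (simp only: wronskian_psi_Suc[OF assms] mult.assoc)
    finally show ?thesis
      unfolding W_def using \<open>L \<noteq> 0\<close> by (simp add: diff_divide_distrib[symmetric])
  qed
  have W_lim: "(\<lambda>k. W (k+n)) \<longlonglongrightarrow> 0 / L"
    unfolding W_def using \<open>L \<noteq> 0\<close>
    by (intro tendsto_divide tendsto_const LIMSEQ_ignore_initial_segment[OF wronskian_psi_LIMSEQ[OF assms]])
  have "(\<lambda>k. W (k+n) - W (Suc (k+n))) sums W n"
    using telescope_sums'[OF W_lim] by simp
  then have "(\<lambda>k. X (k+n)) sums W n"
    by (simp only: step)
  moreover have "W n = z^2 / (z^2 - 1) * wronskian (psi q \<alpha> \<beta> (int n - 1)) (psi q \<alpha> \<beta> (int n)) z"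
    unfolding W_def L_eq by simp
  ultimately show ?thesis
    unfolding X_def by (simp only:)
qed

end

end

theorem lemmaB1:
  fixes q \<alpha> \<beta> :: real and n :: nat and z :: complex
  assumes "0 < q" "q < 1" "-1 < \<alpha>" "\<alpha> < 1" "\<beta> < 1"
    and "0 < norm z" "norm z < 1"
  shows "(\<Sum>k. of_real ((1 - \<beta> * q ^ (k+n)) / (1 - \<alpha> * q ^ (k+n)))
                 * (psi q \<alpha> \<beta> (int (k+n)) z)^2)
         = z^2 / (z^2 - 1) *
           (deriv (psi q \<alpha> \<beta> (int n - 1)) z * psi q \<alpha> \<beta> (int n) z
            - psi q \<alpha> \<beta> (int n - 1) z * deriv (psi q \<alpha> \<beta> (int n)) z)"
proof -
  have "\<bar>\<alpha>\<bar> < 1"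
    using assms(3,4) by auto
  from psi_squares_sums_wronskian[OF assms(1,2) this assms(6,7), where \<beta> = \<beta> and n = n]
  show ?thesis
    unfolding wronskian_def by (rule sums_unique[symmetric])
qed

end
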